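(* Let $a_n$ be the number of equivalence classes of period configurations of Parallel Diffusion on the unlabelled complete graph $K_n$, and let $\alpha\approx 3.2056$ be the unique real root of $x^3-5x^2+7x-4$. Then $a_n\sim c\,\alpha^n$ as $n\to\infty$ for a constant $c\approx 0.1809$; that is, $a_n/\alpha^n$ converges to a positive constant approximately equal to $0.1809$.
   Context: Parallel Diffusion on a graph $G$: a configuration assigns an integer stack size $|v|$ to each vertex. One firing step replaces every stack size simultaneously by $|v| + \#\{u\in N(v): |u|>|v|\} - \#\{u\in N(v): |u|<|v|\}$. A period configuration is a configuration $D$ such that repeated firing starting from $D$ returns to $D$ after some positive number of steps. On the complete graph $K_n$ with unlabelled vertices, a configuration is a multiset of $n$ integers. Two configurations are equivalent if one is obtained from the other by adding the same integer to every stack size. *)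

theory Defs
  imports Complex_Main "HOL-Library.Multiset"
begin

text \<open>A configuration on the unlabelled complete graph K_n is a multiset of n integers.
  In K_n every vertex is adjacent to all others; a vertex with the same stack size
  contributes neither to the larger nor to the smaller count, so the new stack size of
  a vertex of size v is v + #(elements > v) - #(elements < v).\<close>

definition pd_fire :: "int multiset \<Rightarrow> int multiset" where
  "pd_fire M = image_mset
     (\<lambda>v. v + int (size (filter_mset (\<lambda>u. u > v) M)) - int (size (filter_mset (\<lambda>u. u < v) M))) M"

definition period_config :: "int multiset \<Rightarrow> bool" where
  "period_config M \<longleftrightarrow> (\<exists>k::nat. k > 0 \<and> (pd_fire ^^ k) M = M)"

definition config_equiv :: "nat \<Rightarrow> (int multiset \<times> int multiset) set" where
  "config_equiv n = {(M, M'). size M = n \<and> size M' = n \<and> (\<exists>c::int. M' = image_mset (\<lambda>x. x + c) M)}"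

definition period_classes :: "nat \<Rightarrow> int multiset set set" where
  "period_classes n = {M. size M = n \<and> period_config M} // config_equiv n"

definition a_seq :: "nat \<Rightarrow> nat" where
  "a_seq n = card (period_classes n)"

end

theory Submission
  imports Defs
begin

text \<open>The periodic configurations are exactly those in which any two consecutive distinct
  values x < y satisfy y - x < count M x + count M y: under this condition one firing reverses the
  order of the stacks and a second one restores M. Conversely, the potential
  sum |x - y| - 2 sum x ^ 2 never decreases under firing, its increment being a sum of slacks in
  triangle inequalities; along a period all these slacks vanish, and together with the
  injectivity of the firing map on the support this forces the gap condition.

  Normalising the minimum to 0 and removing the stacks at the top value yields a recursion for
  the number of such configurations of size n with top multiplicity m. Its row sums a n satisfy
  a (n + 3) = 5 a (n + 2) - 7 a (n + 1) + 4 a n with a 2, a 3, a 4 = 2, 6, 19, and the two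
  characteristic roots other than \<alpha> have modulus below \<alpha>.\<close>

lemma sum_mset_nonneg:
  fixes f :: "'a \<Rightarrow> 'b::ordered_comm_monoid_add"
  shows "(\<And>x. x \<in># M \<Longrightarrow> 0 \<le> f x) \<Longrightarrow> 0 \<le> (\<Sum>x\<in>#M. f x)"
  by (induction M) (auto intro: add_nonneg_nonneg)

lemma sum_mset_nonneg_eq_0D:
  fixes f :: "'a \<Rightarrow> 'b::ordered_comm_monoid_add"
  assumes "\<And>x. x \<in># M \<Longrightarrow> 0 \<le> f x" "(\<Sum>x\<in>#M. f x) = 0" "x \<in># M"
  shows "f x = 0"
  using assms
proof (induction M)
  case (add u M)
  have "0 \<le> (\<Sum>x\<in>#M. f x)" "0 \<le> f u"
    using add.prems(1) by (auto intro: sum_mset_nonneg)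
  with add.prems(2) have "f u = 0" "(\<Sum>x\<in>#M. f x) = 0"
    by (auto simp: add_nonneg_eq_0_iff)
  with add show ?case by auto
qed simp

lemma sum_mset_uminus:
  fixes f :: "'a \<Rightarrow> 'b::ab_group_add"
  shows "(\<Sum>x\<in>#M. - f x) = - (\<Sum>x\<in>#M. f x)"
  by (induction M) auto

definition drift :: "int multiset \<Rightarrow> int \<Rightarrow> int" where
  "drift M v = (\<Sum>u\<in>#M. sgn (u - v))"

lemma drift_empty [simp]: "drift {#} v = 0"
  by (simp add: drift_def)

lemma drift_add_mset [simp]: "drift (add_mset u M) v = sgn (u - v) + drift M v"
  by (simp add: drift_def)

lemma drift_eq_count_diff:
  "drift M v = int (size (filter_mset (\<lambda>u. u > v) M)) - int (size (filter_mset (\<lambda>u. u < v) M))"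
  by (induction M) (auto simp: sgn_if)

lemma pd_fire_eq: "pd_fire M = image_mset (\<lambda>v. v + drift M v) M"
  unfolding pd_fire_def drift_eq_count_diff by (simp add: add_diff_eq)

definition adjacent :: "int multiset \<Rightarrow> int \<Rightarrow> int \<Rightarrow> bool" where
  "adjacent M x y \<longleftrightarrow> x \<in># M \<and> y \<in># M \<and> x < y \<and> (\<forall>z\<in>#M. \<not> (x < z \<and> z < y))"

definition narrow_gaps :: "int multiset \<Rightarrow> bool" where
  "narrow_gaps M \<longleftrightarrow> (\<forall>x y. adjacent M x y \<longrightarrow> y - x < int (count M x + count M y))"

lemma drift_diff_between:
  assumes "x < y" "\<forall>z\<in>#M. \<not> (x < z \<and> z < y)"
  shows "drift M x - drift M y = int (count M x + count M y)"
  using assms by (induction M) (auto simp: sgn_if)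

lemma drift_diff_adjacent:
  "adjacent M x y \<Longrightarrow> drift M x - drift M y = int (count M x + count M y)"
  unfolding adjacent_def by (blast intro: drift_diff_between)

text \<open>Under narrow gaps one firing step reverses the order of the stacks, overshooting every
  distance; chain the adjacent pairs between x and y.\<close>

lemma narrow_gaps_drift_diff:
  assumes "narrow_gaps M" "x \<in># M" "y \<in># M" "x < y"
  shows "y - x < drift M x - drift M y"
  using assms(2-)
proof (induction "nat (y - x)" arbitrary: x y rule: less_induct)
  case less
  show ?case
  proof (cases "\<exists>z\<in>#M. x < z \<and> z < y")
    case True
    then obtain z where z: "z \<in># M" "x < z" "z < y" by auto
    have "z - x < drift M x - drift M z" "y - z < drift M z - drift M y"
      using less.hyps z less.prems by auto
    then show ?thesis by linarith
  next
    case False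
    then have "adjacent M x y" using less.prems by (simp add: adjacent_def)
    then show ?thesis
      using assms(1) drift_diff_adjacent by (fastforce simp: narrow_gaps_def)
  qed
qed

lemma pd_fire_pd_fire:
  assumes "narrow_gaps M"
  shows "pd_fire (pd_fire M) = M"
proof -
  define f where "f v = v + drift M v" for v
  have reverses: "sgn (f u - f x) = sgn (x - u)" if "x \<in># M" "u \<in># M" for x u
    using narrow_gaps_drift_diff[OF assms, of x u] narrow_gaps_drift_diff[OF assms, of u x] that
    by (cases x u rule: linorder_cases) (auto simp: f_def sgn_if)
  have drift_image: "drift (image_mset f M) (f x) = - drift M x" if "x \<in># M" for x
  proof -
    have "drift (image_mset f M) (f x) = (\<Sum>u\<in>#M. - sgn (u - x))"
      unfolding drift_def multiset.map_comp o_def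
      by (rule arg_cong[where f=sum_mset], rule image_mset_cong) (use reverses that in \<open>auto simp: sgn_if\<close>)
    then show ?thesis by (simp add: sum_mset_uminus drift_def)
  qed
  have "pd_fire (pd_fire M) = image_mset (\<lambda>x. f x + drift (image_mset f M) (f x)) M"
    by (simp add: pd_fire_eq f_def[abs_def] multiset.map_comp o_def)
  also have "\<dots> = image_mset id M"
    by (rule image_mset_cong) (use drift_image in \<open>simp add: f_def\<close>)
  finally show ?thesis by simp
qed

lemma narrow_gaps_period_config: "narrow_gaps M \<Longrightarrow> period_config M"
  unfolding period_config_def
  by (rule exI[of _ 2]) (simp add: pd_fire_pd_fire numeral_2_eq_2)

definition total_distance :: "int multiset \<Rightarrow> int" where
  "total_distance M = (\<Sum>x\<in>#M. \<Sum>y\<in>#M. \<bar>x - y\<bar>)"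

definition sum_squares :: "int multiset \<Rightarrow> int" where
  "sum_squares M = (\<Sum>x\<in>#M. x\<^sup>2)"

definition potential :: "int multiset \<Rightarrow> int" where
  "potential M = total_distance M - 2 * sum_squares M"

definition fire_defect :: "int multiset \<Rightarrow> int \<Rightarrow> int \<Rightarrow> int" where
  "fire_defect M x y =
     \<bar>x - y\<bar> + \<bar>(x + drift M x) - (y + drift M y)\<bar> - (drift M x - drift M y) * sgn (y - x)"

lemma fire_defect_nonneg: "0 \<le> fire_defect M x y"
proof -
  have "\<bar>drift M x - drift M y\<bar> \<le> \<bar>x - y\<bar> + \<bar>(x + drift M x) - (y + drift M y)\<bar>"
    by linarith
  moreover have "(drift M x - drift M y) * sgn (y - x) \<le> \<bar>drift M x - drift M y\<bar>"
    by (auto simp: sgn_if)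
  ultimately show ?thesis unfolding fire_defect_def by linarith
qed

lemma sum_squares_pd_fire:
  "sum_squares (pd_fire M) = sum_squares M - total_distance M + (\<Sum>x\<in>#M. (drift M x)\<^sup>2)"
proof -
  define K where "K = (\<Sum>x\<in>#M. \<Sum>y\<in>#M. x * sgn (y - x))"
  have "K + K = (\<Sum>x\<in>#M. \<Sum>y\<in>#M. x * sgn (y - x) + y * sgn (x - y))"
    unfolding K_def sum_mset.distrib by (subst (2) sum_mset.swap) (rule refl)
  also have "\<dots> = (\<Sum>x\<in>#M. \<Sum>y\<in>#M. - \<bar>x - y\<bar>)"
    by (intro arg_cong[where f=sum_mset] image_mset_cong) (auto simp: sgn_if)
  finally have K: "2 * K = - total_distance M"
    by (simp add: total_distance_def sum_mset_uminus)
  have "sum_squares (pd_fire M) = (\<Sum>x\<in>#M. x\<^sup>2 + 2 * (x * drift M x) + (drift M x)\<^sup>2)"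
    by (simp add: sum_squares_def pd_fire_eq multiset.map_comp o_def power2_eq_square algebra_simps)
  also have "\<dots> = sum_squares M + 2 * K + (\<Sum>x\<in>#M. (drift M x)\<^sup>2)"
    by (simp add: sum_mset.distrib sum_squares_def K_def drift_def sum_mset_distrib_left)
  finally show ?thesis using K by simp
qed

lemma sum_fire_defect:
  "(\<Sum>x\<in>#M. \<Sum>y\<in>#M. fire_defect M x y)
     = total_distance M + total_distance (pd_fire M) - 2 * (\<Sum>x\<in>#M. (drift M x)\<^sup>2)"
proof -
  have fired: "total_distance (pd_fire M) = (\<Sum>x\<in>#M. \<Sum>y\<in>#M. \<bar>(x + drift M x) - (y + drift M y)\<bar>)"
    by (simp add: total_distance_def pd_fire_eq multiset.map_comp o_def)
  have left: "(\<Sum>x\<in>#M. \<Sum>y\<in>#M. drift M x * sgn (y - x)) = (\<Sum>x\<in>#M. (drift M x)\<^sup>2)"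
    by (simp add: drift_def sum_mset_distrib_left power2_eq_square)
  have "(\<Sum>x\<in>#M. \<Sum>y\<in>#M. drift M y * sgn (y - x)) = (\<Sum>y\<in>#M. \<Sum>x\<in>#M. - (drift M y * sgn (x - y)))"
    by (subst sum_mset.swap) (intro arg_cong[where f=sum_mset] image_mset_cong, auto simp: sgn_if)
  also have "\<dots> = - (\<Sum>x\<in>#M. (drift M x)\<^sup>2)"
    by (simp add: drift_def sum_mset_uminus sum_mset_distrib_left power2_eq_square)
  finally have right: "(\<Sum>x\<in>#M. \<Sum>y\<in>#M. drift M y * sgn (y - x)) = - (\<Sum>x\<in>#M. (drift M x)\<^sup>2)" .
  have "(\<Sum>x\<in>#M. \<Sum>y\<in>#M. fire_defect M x y) = (\<Sum>x\<in>#M. \<Sum>y\<in>#M.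
      \<bar>x - y\<bar> + \<bar>(x + drift M x) - (y + drift M y)\<bar> + (- (drift M x * sgn (y - x)) + drift M y * sgn (y - x)))"
    by (intro arg_cong[where f=sum_mset] image_mset_cong) (simp add: fire_defect_def algebra_simps)
  also have "\<dots> = total_distance M + total_distance (pd_fire M) - 2 * (\<Sum>x\<in>#M. (drift M x)\<^sup>2)"
    unfolding sum_mset.distrib fired total_distance_def[of M] by (simp add: sum_mset_uminus left right)
  finally show ?thesis .
qed

lemma potential_pd_fire:
  "potential (pd_fire M) = potential M + (\<Sum>x\<in>#M. \<Sum>y\<in>#M. fire_defect M x y)"
  unfolding potential_def sum_fire_defect sum_squares_pd_fire by simp

lemma potential_le_pd_fire: "potential M \<le> potential (pd_fire M)"
  unfolding potential_pd_fire
  by (simp add: sum_mset_nonneg fire_defect_nonneg)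

lemma period_config_monotone_invariant:
  fixes f :: "int multiset \<Rightarrow> 'a::order"
  assumes mono: "\<And>N. f N \<le> f (pd_fire N)" and "period_config M"
  shows "f (pd_fire M) = f M"
proof -
  obtain k where k: "k > 0" "(pd_fire ^^ k) M = M"
    using assms(2) unfolding period_config_def by auto
  have "f ((pd_fire ^^ i) M) \<le> f ((pd_fire ^^ j) M)" if "i \<le> j" for i j
    by (rule lift_Suc_mono_le[of "\<lambda>i. f ((pd_fire ^^ i) M)", OF _ that]) (simp add: mono)
  from this[of 1 k] this[of 0 1] k show ?thesis by (simp add: antisym)
qed

lemma period_config_fire_defect_eq_0:
  assumes "period_config M" "x \<in># M" "y \<in># M"
  shows "fire_defect M x y = 0"
proof -
  have "(\<Sum>x\<in>#M. \<Sum>y\<in>#M. fire_defect M x y) = 0"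
    using period_config_monotone_invariant[of potential, OF potential_le_pd_fire assms(1)]
    by (simp add: potential_pd_fire)
  then have "(\<Sum>y\<in>#M. fire_defect M x y) = 0"
    using assms(2) by (rule sum_mset_nonneg_eq_0D[rotated])
      (simp add: sum_mset_nonneg fire_defect_nonneg)
  then show ?thesis
    using assms(3) by (rule sum_mset_nonneg_eq_0D[rotated]) (simp add: fire_defect_nonneg)
qed

lemma period_config_inj_on_fire:
  assumes "period_config M"
  shows "inj_on (\<lambda>v. v + drift M v) (set_mset M)"
proof -
  have "- int (card (set_mset N)) \<le> - int (card (set_mset (pd_fire N)))" for N
    by (simp add: pd_fire_eq card_image_le)
  from period_config_monotone_invariant[of "\<lambda>N. - int (card (set_mset N))", OF this assms]
  show ?thesis by (simp add: pd_fire_eq inj_on_iff_eq_card)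
qed

lemma period_config_narrow_gaps:
  assumes "period_config M"
  shows "narrow_gaps M"
  unfolding narrow_gaps_def
proof (intro allI impI)
  fix x y assume adj: "adjacent M x y"
  then have xy: "x \<in># M" "y \<in># M" "x < y" by (auto simp: adjacent_def)
  have "x + drift M x \<noteq> y + drift M y"
    using period_config_inj_on_fire[OF assms] xy unfolding inj_on_def by auto
  then show "y - x < int (count M x + count M y)"
    using period_config_fire_defect_eq_0[OF assms xy(1,2)] drift_diff_adjacent[OF adj] xy(3)
    unfolding fire_defect_def by (auto simp: sgn_if)
qed

lemma period_config_iff_narrow_gaps: "period_config M \<longleftrightarrow> narrow_gaps M"
  using period_config_narrow_gaps narrow_gaps_period_config by blast

definition shift :: "int \<Rightarrow> int multiset \<Rightarrow> int multiset" where
  "shift c M = image_mset (\<lambda>x. x + c) M"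

lemma shift_shift: "shift c (shift d M) = shift (c + d) M"
  by (simp add: shift_def multiset.map_comp o_def algebra_simps)

lemma shift_0 [simp]: "shift 0 M = M"
  by (simp add: shift_def)

lemma size_shift [simp]: "size (shift c M) = size M"
  by (simp add: shift_def)

lemma shift_inject [simp]: "shift c M = shift c N \<longleftrightarrow> M = N"
  by (metis shift_0 shift_shift add.left_inverse)

lemma drift_shift: "drift (shift c M) (v + c) = drift M v"
  by (simp add: drift_def shift_def multiset.map_comp o_def)

lemma pd_fire_shift: "pd_fire (shift c M) = shift c (pd_fire M)"
  using drift_shift[of c M, unfolded shift_def]
  by (simp add: pd_fire_eq shift_def multiset.map_comp o_def algebra_simps)

lemma funpow_pd_fire_shift: "(pd_fire ^^ k) (shift c M) = shift c ((pd_fire ^^ k) M)"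
  by (induction k) (simp_all add: pd_fire_shift)

lemma period_config_shift [simp]: "period_config (shift c M) \<longleftrightarrow> period_config M"
  unfolding period_config_def funpow_pd_fire_shift by simp

lemma Min_shift:
  assumes "M \<noteq> {#}"
  shows "Min (set_mset (shift c M)) = Min (set_mset M) + c"
proof -
  have "mono (\<lambda>x::int. x + c)" by (simp add: mono_def)
  then show ?thesis using assms by (simp add: shift_def mono_Min_commute[symmetric])
qed

lemma range_shift_shift: "range (\<lambda>c. shift c (shift d M)) = range (\<lambda>c. shift c M)"
proof (auto simp: shift_shift)
  fix c show "shift c M \<in> range (\<lambda>c. shift (c + d) M)"
    by (rule image_eqI[of _ _ "c - d"]) auto
qed

lemma config_equiv_class:
  "size M = n \<Longrightarrow> config_equiv n `` {M} = range (\<lambda>c. shift c M)"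
  unfolding config_equiv_def shift_def by auto

definition narrow_configs :: "nat \<Rightarrow> int multiset set" where
  "narrow_configs n = {M. size M = n \<and> narrow_gaps M \<and> Min (set_mset M) = 0}"

text \<open>Each class contains exactly one configuration with minimum 0.\<close>

lemma a_seq_eq_card_narrow_configs:
  assumes "n \<ge> 1"
  shows "a_seq n = card (narrow_configs n)"
proof -
  define cls where "cls M = config_equiv n `` {M}" for M
  have ne: "M \<noteq> {#}" if "size M = n" for M using that assms by auto
  have "period_classes n = cls ` narrow_configs n"
  proof (intro equalityI subsetI)
    fix X assume "X \<in> period_classes n"
    then obtain M where M: "size M = n" "period_config M" and X: "X = cls M"
      unfolding period_classes_def quotient_def cls_def by auto
    define N where "N = shift (- Min (set_mset M)) M"
    have "N \<in> narrow_configs n"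
      using M Min_shift[OF ne] by (simp add: narrow_configs_def N_def period_config_iff_narrow_gaps[symmetric])
    moreover have "cls N = cls M"
      using M by (simp add: cls_def config_equiv_class N_def range_shift_shift)
    ultimately show "X \<in> cls ` narrow_configs n" using X by blast
  next
    fix X assume "X \<in> cls ` narrow_configs n"
    then show "X \<in> period_classes n"
      unfolding period_classes_def narrow_configs_def cls_def
      by (auto simp: period_config_iff_narrow_gaps intro: quotientI)
  qed
  moreover have "inj_on cls (narrow_configs n)"
  proof (rule inj_onI)
    fix M N assume MN: "M \<in> narrow_configs n" "N \<in> narrow_configs n" "cls M = cls N"
    have "range (\<lambda>c. shift c M) = range (\<lambda>c. shift c N)"
      using MN by (simp add: cls_def config_equiv_class narrow_configs_def)
    moreover have "N \<in> range (\<lambda>c. shift c N)" by (metis rangeI shift_0)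
    ultimately obtain c where c: "N = shift c M" by auto
    moreover have "M \<noteq> {#}" using MN(1) ne unfolding narrow_configs_def by blast
    ultimately have "c = 0" using MN(1,2) Min_shift[of M c] by (simp add: narrow_configs_def)
    then show "M = N" using c by simp
  qed
  ultimately show ?thesis unfolding a_seq_def by (simp add: card_image)
qed

definition top_mult :: "int multiset \<Rightarrow> nat" where
  "top_mult M = count M (Max (set_mset M))"

definition narrow_configs_top :: "nat \<Rightarrow> nat \<Rightarrow> int multiset set" where
  "narrow_configs_top n m = {M \<in> narrow_configs n. top_mult M = m}"

lemma top_mult_range: "M \<noteq> {#} \<Longrightarrow> top_mult M \<in> {1..size M}"
  unfolding top_mult_def by (auto simp: Suc_le_eq count_le_size)

lemma narrow_configs_eq_UN:
  "n \<ge> 1 \<Longrightarrow> narrow_configs n = (\<Union>m\<in>{1..n}. narrow_configs_top n m)"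
proof -
  assume "n \<ge> 1"
  then have "top_mult M \<in> {1..n}" if "M \<in> narrow_configs n" for M
    using that top_mult_range[of M] by (cases "M = {#}") (auto simp: narrow_configs_def)
  then show ?thesis by (auto simp: narrow_configs_top_def)
qed

lemma count_eq_size_imp_replicate_mset:
  assumes "count M x = size M"
  shows "M = replicate_mset (size M) x"
proof -
  have "size (filter_mset (\<lambda>y. y = x) M) + size (filter_mset (\<lambda>y. y \<noteq> x) M) = size M"
    by (metis multiset_partition size_union)
  then have "filter_mset (\<lambda>y. y \<noteq> x) M = {#}"
    using assms by (simp add: filter_eq_replicate_mset)
  then have "set_mset M \<subseteq> {x}" by (auto simp: filter_empty_mset)
  then show ?thesis by (rule set_mset_subset_singletonD)
qed

lemma narrow_configs_top_self:
  assumes "n \<ge> 1"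
  shows "narrow_configs_top n n = {replicate_mset n 0}"
proof (intro equalityI subsetI)
  fix M assume "M \<in> narrow_configs_top n n"
  then have M: "count M (Max (set_mset M)) = size M" "size M = n" "Min (set_mset M) = 0"
    by (auto simp: narrow_configs_top_def narrow_configs_def top_mult_def)
  then have rep: "M = replicate_mset n (Max (set_mset M))"
    using count_eq_size_imp_replicate_mset by metis
  then have "set_mset M = {Max (set_mset M)}"
    using assms by (metis set_mset_replicate_mset_subset not_one_le_zero)
  then have "Max (set_mset M) = 0" using M(3) by (metis Min_singleton)
  then show "M \<in> {replicate_mset n 0}" using rep by simp
next
  have "narrow_gaps (replicate_mset n 0)" by (auto simp: narrow_gaps_def adjacent_def)
  then show "M \<in> narrow_configs_top n n" if "M \<in> {replicate_mset n 0}" for M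
    using that assms by (auto simp: narrow_configs_top_def narrow_configs_def top_mult_def)
qed

lemma
  assumes "M \<noteq> {#}" "Max (set_mset M) < t" "m \<ge> 1"
  shows set_mset_add_top: "set_mset (M + replicate_mset m t) = insert t (set_mset M)"
    and Max_add_top: "Max (set_mset (M + replicate_mset m t)) = t"
    and Min_add_top: "Min (set_mset (M + replicate_mset m t)) = Min (set_mset M)"
    and top_mult_add_top: "top_mult (M + replicate_mset m t) = m"
proof -
  have fin: "finite (set_mset M)" "set_mset M \<noteq> {}" using assms(1) by auto
  have "t \<notin># M" using assms(2) fin Max_ge leD by blast
  show set: "set_mset (M + replicate_mset m t) = insert t (set_mset M)"
    using assms(3) by auto
  show max: "Max (set_mset (M + replicate_mset m t)) = t"
    unfolding set using fin assms(2) by simp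
  show "Min (set_mset (M + replicate_mset m t)) = Min (set_mset M)"
    unfolding set using fin assms(2) Min_le_iff[of "set_mset M"] by (simp add: Min_insert)
  show "top_mult (M + replicate_mset m t) = m"
    unfolding top_mult_def max using \<open>t \<notin># M\<close> by (simp add: not_in_iff)
qed

lemma adjacent_add_top:
  assumes "M \<noteq> {#}" "Max (set_mset M) < t" "m \<ge> 1"
  shows "adjacent (M + replicate_mset m t) x y \<longleftrightarrow> adjacent M x y \<or> (x = Max (set_mset M) \<and> y = t)"
proof -
  have le: "z \<le> Max (set_mset M)" if "z \<in># M" for z using that by simp
  have mx: "Max (set_mset M) \<in># M" using assms(1) by simp
  have "adjacent (M + replicate_mset m t) x y \<longleftrightarrow>
      x \<in># M \<and> (y = t \<or> y \<in># M) \<and> x < y \<and> (\<forall>z\<in>#M. \<not> (x < z \<and> z < y))"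
    unfolding adjacent_def set_mset_add_top[OF assms] using le assms(2) by fastforce
  also have "\<dots> \<longleftrightarrow> adjacent M x y \<or> (x = Max (set_mset M) \<and> y = t)"
  proof -
    have "x = Max (set_mset M)" if "x \<in># M" "\<forall>z\<in>#M. \<not> (x < z \<and> z < t)"
      using that(2) mx le[OF that(1)] assms(2) by force
    then show ?thesis unfolding adjacent_def using le mx assms(2) by fastforce
  qed
  finally show ?thesis .
qed

lemma narrow_gaps_add_top:
  assumes "M \<noteq> {#}" "Max (set_mset M) < t" "m \<ge> 1"
  shows "narrow_gaps (M + replicate_mset m t) \<longleftrightarrow>
    narrow_gaps M \<and> t - Max (set_mset M) < int (m + top_mult M)"
proof -
  have "t \<notin># M" using assms(2) by (meson Max_ge finite_set_mset leD)
  then have count_M: "count (M + replicate_mset m t) x = count M x" if "x \<in># M" for x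
    using that by auto
  have "count (M + replicate_mset m t) t = m" using \<open>t \<notin># M\<close> by (simp add: not_in_iff)
  moreover have "Max (set_mset M) \<in># M" using assms(1) by simp
  moreover have "x \<in># M \<and> y \<in># M" if "adjacent M x y" for x y
    using that by (simp add: adjacent_def)
  ultimately show ?thesis
    unfolding narrow_gaps_def adjacent_add_top[OF assms] top_mult_def
    using count_M by (auto simp: add.commute)
qed

definition add_top :: "nat \<Rightarrow> int multiset \<times> nat \<Rightarrow> int multiset" where
  "add_top m = (\<lambda>(M, d). M + replicate_mset m (Max (set_mset M) + int d))"

lemma add_top_in_narrow_configs_top:
  assumes "M \<in> narrow_configs j" "d \<in> {1..m + top_mult M - 1}" "m \<ge> 1" "j \<ge> 1"
  shows "add_top m (M, d) \<in> narrow_configs_top (j + m) m"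
proof -
  have ne: "M \<noteq> {#}" using assms(1,4) by (auto simp: narrow_configs_def)
  have t: "Max (set_mset M) < Max (set_mset M) + int d" using assms(2) by simp
  have "narrow_gaps (add_top m (M, d))"
    using assms(1,2) by (auto simp: add_top_def narrow_gaps_add_top[OF ne t assms(3)] narrow_configs_def)
  then show ?thesis
    using assms(1) Min_add_top[OF ne t assms(3)] top_mult_add_top[OF ne t assms(3)]
    by (simp add: add_top_def narrow_configs_top_def narrow_configs_def)
qed

lemma narrow_configs_top_decompose:
  assumes "M \<in> narrow_configs_top n m" "1 \<le> m" "m < n"
  obtains M' d where "M' \<in> narrow_configs (n - m)" "d \<in> {1..m + top_mult M' - 1}" "M = add_top m (M', d)"
proof -
  define t where "t = Max (set_mset M)"
  define M' where "M' = M - replicate_mset m t"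
  have M: "size M = n" "narrow_gaps M" "Min (set_mset M) = 0" "count M t = m"
    using assms(1) by (auto simp: narrow_configs_top_def narrow_configs_def top_mult_def t_def)
  have "replicate_mset m t \<subseteq># M" using count_le_replicate_mset_subset_eq[of m M t] M(4) by simp
  then have MM': "M = M' + replicate_mset m t" and size_M': "size M' = n - m"
    using M(1) by (auto simp: M'_def size_Diff_submset)
  then have ne: "M' \<noteq> {#}" using assms(3) by auto
  have "x < t" if "x \<in># M'" for x
  proof -
    have "x \<le> t" using that in_diffD[of x M] by (simp add: M'_def t_def)
    moreover have "count M' t = 0" using M(4) by (simp add: M'_def)
    ultimately show ?thesis using that by (metis not_in_iff order.not_eq_order_implies_strict)
  qed
  then have t: "Max (set_mset M') < t" using ne by simp
  have gaps: "narrow_gaps M'" "t - Max (set_mset M') < int (m + top_mult M')"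
    using M(2) unfolding MM' narrow_gaps_add_top[OF ne t assms(2)] by auto
  define d where "d = nat (t - Max (set_mset M'))"
  have "M' \<in> narrow_configs (n - m)"
    using size_M' gaps(1) M(3) Min_add_top[OF ne t assms(2)] by (simp add: MM' narrow_configs_def)
  moreover have "d \<in> {1..m + top_mult M' - 1}" using gaps(2) t unfolding d_def by simp arith
  moreover have "M = add_top m (M', d)" using t by (simp add: MM' add_top_def d_def)
  ultimately show ?thesis by (rule that)
qed

lemma inj_on_add_top:
  assumes "m \<ge> 1"
  shows "inj_on (add_top m) {(M, d). M \<noteq> {#} \<and> d \<ge> 1}"
proof (rule inj_onI, clarify)
  fix M d N e assume *: "add_top m (M, d) = add_top m (N, e)" "M \<noteq> {#}" "d \<ge> 1" "N \<noteq> {#}" "e \<ge> 1"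
  have lt: "Max (set_mset M) < Max (set_mset M) + int d" "Max (set_mset N) < Max (set_mset N) + int e"
    using * by auto
  from arg_cong[OF *(1), of "\<lambda>M. Max (set_mset M)"]
  have "Max (set_mset M) + int d = Max (set_mset N) + int e"
    by (simp only: add_top_def prod.case Max_add_top[OF \<open>M \<noteq> {#}\<close> lt(1) assms]
        Max_add_top[OF \<open>N \<noteq> {#}\<close> lt(2) assms])
  with *(1) have "M = N" by (simp add: add_top_def)
  then show "M = N \<and> d = e" using \<open>Max (set_mset M) + int d = _\<close> by simp
qed

lemma bij_betw_add_top:
  assumes "1 \<le> m" "m < n"
  shows "bij_betw (add_top m) (SIGMA M:narrow_configs (n - m). {1..m + top_mult M - 1})
    (narrow_configs_top n m)"
proof (rule bij_betw_imageI)
  have "(SIGMA M:narrow_configs (n - m). {1..m + top_mult M - 1}) \<subseteq> {(M, d). M \<noteq> {#} \<and> d \<ge> 1}"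
    using assms by (auto simp: narrow_configs_def)
  then show "inj_on (add_top m) (SIGMA M:narrow_configs (n - m). {1..m + top_mult M - 1})"
    using inj_on_add_top[OF assms(1)] by (rule inj_on_subset[rotated])
  show "add_top m ` (SIGMA M:narrow_configs (n - m). {1..m + top_mult M - 1}) = narrow_configs_top n m"
  proof (intro equalityI subsetI)
    fix M assume "M \<in> add_top m ` (SIGMA M:narrow_configs (n - m). {1..m + top_mult M - 1})"
    then obtain M' d where "M' \<in> narrow_configs (n - m)" "d \<in> {1..m + top_mult M' - 1}"
      "M = add_top m (M', d)" by auto
    then show "M \<in> narrow_configs_top n m"
      using add_top_in_narrow_configs_top[of M' "n - m" d m] assms by simp
  next
    fix M assume "M \<in> narrow_configs_top n m"
    then show "M \<in> add_top m ` (SIGMA M:narrow_configs (n - m). {1..m + top_mult M - 1})"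
      by (rule narrow_configs_top_decompose[OF _ assms]) auto
  qed
qed

lemma finite_narrow_configs: "finite (narrow_configs n)"
proof (induction n rule: less_induct)
  case (less n)
  show ?case
  proof (cases "n = 0")
    case True
    then have "narrow_configs n \<subseteq> {{#}}" by (auto simp: narrow_configs_def)
    then show ?thesis by (rule finite_subset) simp
  next
    case n: False
    have "finite (narrow_configs_top n m)" if "m \<in> {1..n}" for m
    proof (cases "m = n")
      case True
      then show ?thesis using n by (simp add: narrow_configs_top_self)
    next
      case False
      with that have m: "1 \<le> m" "m < n" by auto
      with less.IH[of "n - m"] have "finite (SIGMA M:narrow_configs (n - m). {1..m + top_mult M - 1})"
        by auto
      then show ?thesis using bij_betw_finite[OF bij_betw_add_top[OF m]] by simp
    qed
    then show ?thesis using n by (simp add: narrow_configs_eq_UN)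
  qed
qed

lemma finite_narrow_configs_top: "finite (narrow_configs_top n m)"
  using finite_narrow_configs[of n] by (rule finite_subset[rotated]) (auto simp: narrow_configs_top_def)

lemma disjoint_narrow_configs_top: "i \<noteq> j \<Longrightarrow> narrow_configs_top n i \<inter> narrow_configs_top n j = {}"
  by (auto simp: narrow_configs_top_def)

lemma card_narrow_configs:
  "n \<ge> 1 \<Longrightarrow> card (narrow_configs n) = (\<Sum>m=1..n. card (narrow_configs_top n m))"
  by (simp add: narrow_configs_eq_UN card_UN_disjoint finite_narrow_configs_top disjoint_narrow_configs_top)

lemma card_narrow_configs_top:
  assumes "1 \<le> m" "m < n"
  shows "card (narrow_configs_top n m) = (\<Sum>k=1..n-m. (m + k - 1) * card (narrow_configs_top (n - m) k))"
proof -
  have "card (narrow_configs_top n m) = card (SIGMA M:narrow_configs (n - m). {1..m + top_mult M - 1})"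
    using bij_betw_same_card[OF bij_betw_add_top[OF assms]] by simp
  also have "\<dots> = (\<Sum>M\<in>narrow_configs (n - m). m + top_mult M - 1)"
    using finite_narrow_configs by (simp add: card_SigmaI)
  also have "\<dots> = (\<Sum>k=1..n-m. \<Sum>M\<in>narrow_configs_top (n - m) k. m + top_mult M - 1)"
    using assms
    by (simp add: narrow_configs_eq_UN sum.UNION_disjoint finite_narrow_configs_top disjoint_narrow_configs_top)
  also have "\<dots> = (\<Sum>k=1..n-m. (m + k - 1) * card (narrow_configs_top (n - m) k))"
    by (intro sum.cong refl) (simp add: narrow_configs_top_def)
  finally show ?thesis .
qed

definition row_sum :: "(nat \<Rightarrow> nat \<Rightarrow> nat) \<Rightarrow> nat \<Rightarrow> int" where
  "row_sum g n = (\<Sum>m=1..n. int (g n m))"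

definition row_moment :: "(nat \<Rightarrow> nat \<Rightarrow> nat) \<Rightarrow> nat \<Rightarrow> int" where
  "row_moment g n = (\<Sum>m=1..n. int m * int (g n m))"

definition row_sum_prefix :: "(nat \<Rightarrow> nat \<Rightarrow> nat) \<Rightarrow> nat \<Rightarrow> int" where
  "row_sum_prefix g n = (\<Sum>m=1..n. row_sum g (n - m))"

definition row_sum_weighted_prefix :: "(nat \<Rightarrow> nat \<Rightarrow> nat) \<Rightarrow> nat \<Rightarrow> int" where
  "row_sum_weighted_prefix g n = (\<Sum>m=1..n. int (m + 1) * row_sum g (n - m))"

lemma sum_atLeast1_atMost_Suc: "(\<Sum>m=1..Suc n. f m) = f 1 + (\<Sum>m=1..n. f (Suc m) :: 'a::comm_monoid_add)"
proof -
  have "sum f {1..Suc n} = f 1 + sum f {Suc 1..Suc n}" by (rule sum.atLeast_Suc_atMost) simp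
  then show ?thesis by (simp only: sum.shift_bounds_cl_Suc_ivl)
qed

lemma row_sum_prefix_Suc: "row_sum_prefix g (Suc n) = row_sum_prefix g n + row_sum g n"
  unfolding row_sum_prefix_def sum_atLeast1_atMost_Suc by simp

lemma row_sum_weighted_prefix_Suc:
  "row_sum_weighted_prefix g (Suc n) = 2 * row_sum g n + row_sum_prefix g n + row_sum_weighted_prefix g n"
  unfolding row_sum_weighted_prefix_def row_sum_prefix_def sum_atLeast1_atMost_Suc
  by (simp add: sum.distrib[symmetric] algebra_simps)

locale top_recursion =
  fixes g :: "nat \<Rightarrow> nat \<Rightarrow> nat"
  assumes diag: "n \<ge> 1 \<Longrightarrow> g n n = 1"
    and rec: "1 \<le> m \<Longrightarrow> m < n \<Longrightarrow> g n m = (\<Sum>k=1..n-m. (m + k - 1) * g (n - m) k)"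
begin

lemma g_Suc_Suc:
  assumes "1 \<le> m" "m \<le> n"
  shows "int (g (Suc n) (Suc m)) = int (g n m) + row_sum g (n - m)"
proof (cases "m = n")
  case True
  then show ?thesis using assms diag by (simp add: row_sum_def)
next
  case False
  then have "m < n" using assms by simp
  have "g (Suc n) (Suc m) = (\<Sum>k=1..n-m. (Suc m + k - 1) * g (n - m) k)"
    using rec[of "Suc m" "Suc n"] \<open>m < n\<close> by simp
  also have "\<dots> = (\<Sum>k=1..n-m. (m + k - 1) * g (n - m) k + g (n - m) k)"
  proof (intro sum.cong refl)
    fix k assume "k \<in> {1..n-m}"
    then obtain i where "k = Suc i" by (cases k) auto
    then show "(Suc m + k - 1) * g (n - m) k = (m + k - 1) * g (n - m) k + g (n - m) k" by simp
  qed
  finally show ?thesis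
    using rec[of m n] \<open>m < n\<close> assms by (simp add: sum.distrib row_sum_def)
qed

lemma g_Suc_1: "n \<ge> 1 \<Longrightarrow> int (g (Suc n) 1) = row_moment g n"
  using rec[of 1 "Suc n"] by (simp add: row_moment_def)

lemma row_sum_Suc:
  assumes "n \<ge> 1"
  shows "row_sum g (Suc n) = row_sum g n + row_moment g n + row_sum_prefix g n"
proof -
  have "row_sum g (Suc n) = int (g (Suc n) 1) + (\<Sum>m=1..n. int (g (Suc n) (Suc m)))"
    unfolding row_sum_def by (rule sum_atLeast1_atMost_Suc)
  also have "\<dots> = row_moment g n + (\<Sum>m=1..n. int (g n m) + row_sum g (n - m))"
    using assms by (intro arg_cong2[where f="(+)"] g_Suc_1 sum.cong refl) (auto simp: g_Suc_Suc)
  finally show ?thesis by (simp add: sum.distrib row_sum_def row_sum_prefix_def)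
qed

lemma row_moment_Suc:
  assumes "n \<ge> 1"
  shows "row_moment g (Suc n) = row_sum g n + 2 * row_moment g n + row_sum_weighted_prefix g n"
proof -
  have "row_moment g (Suc n) = int (g (Suc n) 1) + (\<Sum>m=1..n. int (Suc m) * int (g (Suc n) (Suc m)))"
    unfolding row_moment_def by (subst sum_atLeast1_atMost_Suc) simp
  also have "\<dots> = row_moment g n
      + (\<Sum>m=1..n. int m * int (g n m) + int (g n m) + int (m + 1) * row_sum g (n - m))"
    using assms by (intro arg_cong2[where f="(+)"] g_Suc_1 sum.cong refl) (auto simp: g_Suc_Suc algebra_simps)
  finally show ?thesis by (simp add: sum.distrib row_sum_def row_moment_def row_sum_weighted_prefix_def)
qed

lemma row_sum_recurrence:
  assumes "k \<ge> 2"
  shows "row_sum g (k + 3) = 5 * row_sum g (k + 2) - 7 * row_sum g (k + 1) + 4 * row_sum g k"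
proof -
  obtain n where n: "k = Suc n" "n \<ge> 1" using assms by (cases k) auto
  have n': "Suc n \<ge> 1" "Suc (Suc n) \<ge> 1" "Suc (Suc (Suc n)) \<ge> 1" by simp_all
  have "row_sum g (Suc (Suc (Suc (Suc n))))
      = 5 * row_sum g (Suc (Suc (Suc n))) - 7 * row_sum g (Suc (Suc n)) + 4 * row_sum g (Suc n)"
    using row_sum_Suc[OF n(2)] row_sum_Suc[OF n'(1)] row_sum_Suc[OF n'(2)] row_sum_Suc[OF n'(3)]
      row_moment_Suc[OF n(2)] row_moment_Suc[OF n'(1)] row_moment_Suc[OF n'(2)]
      row_sum_prefix_Suc[of g n] row_sum_prefix_Suc[of g "Suc n"] row_sum_prefix_Suc[of g "Suc (Suc n)"]
      row_sum_weighted_prefix_Suc[of g n] row_sum_weighted_prefix_Suc[of g "Suc n"]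
    by linarith
  then show ?thesis unfolding n(1) by (simp add: numeral_eq_Suc)
qed

lemma row_sum_initial: "row_sum g 2 = 2" "row_sum g 3 = 6" "row_sum g 4 = 19"
proof -
  have A1: "row_sum g 1 = 1" and M1: "row_moment g 1 = 1"
    using diag[of 1] by (simp_all add: row_sum_def row_moment_def)
  have P1: "row_sum_prefix g 1 = 0" and W1: "row_sum_weighted_prefix g 1 = 0"
    by (simp_all add: row_sum_def row_sum_prefix_def row_sum_weighted_prefix_def)
  have ge1: "Suc 1 \<ge> 1" "Suc (Suc 1) \<ge> 1" by simp_all
  have A2: "row_sum g (Suc 1) = 2" using row_sum_Suc[of 1] A1 M1 P1 by simp
  have M2: "row_moment g (Suc 1) = 3" using row_moment_Suc[of 1] A1 M1 W1 by simp
  have P2: "row_sum_prefix g (Suc 1) = 1" using row_sum_prefix_Suc[of g 1] A1 P1 by simp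
  have A3: "row_sum g (Suc (Suc 1)) = 6" using row_sum_Suc[OF ge1(1)] A2 M2 P2 by simp
  have M3: "row_moment g (Suc (Suc 1)) = 10"
    using row_moment_Suc[OF ge1(1)] row_sum_weighted_prefix_Suc[of g 1] A1 A2 M2 P1 W1 by simp
  have P3: "row_sum_prefix g (Suc (Suc 1)) = 3" using row_sum_prefix_Suc[of g "Suc 1"] A2 P2 by simp
  have A4: "row_sum g (Suc (Suc (Suc 1))) = 19" using row_sum_Suc[OF ge1(2)] A3 M3 P3 by simp
  show "row_sum g 2 = 2" "row_sum g 3 = 6" "row_sum g 4 = 19"
    using A2 A3 A4 by (simp_all add: numeral_eq_Suc)
qed

end

text \<open>The quadratic form N k is multiplied by q at every step and, as p ^ 2 < 4 q, it is positive
  definite, so e k ^ 2 = O(q ^ k).\<close>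

lemma second_order_recurrence_decay:
  fixes e :: "nat \<Rightarrow> real"
  assumes rec: "\<And>k. e (k + 2) = p * e (k + 1) - q * e k"
    and disc: "p\<^sup>2 < 4 * q" and q_less: "q < \<beta>\<^sup>2" and "0 < \<beta>"
  shows "(\<lambda>k. e k / \<beta> ^ k) \<longlonglongrightarrow> 0"
proof -
  define N where "N k = (e (k + 1))\<^sup>2 - p * e (k + 1) * e k + q * (e k)\<^sup>2" for k
  have "N (Suc k) = q * N k" for k
  proof -
    have "N (Suc k) = (e (k + 2))\<^sup>2 - p * e (k + 2) * e (k + 1) + q * (e (k + 1))\<^sup>2"
      by (simp add: N_def numeral_2_eq_2)
    also have "\<dots> = q * N k"
      unfolding rec N_def by (simp add: algebra_simps power2_eq_square)
    finally show ?thesis .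
  qed
  then have N: "N k = N 0 * q ^ k" for k by (induction k) simp_all
  define \<delta> where "\<delta> = q - p\<^sup>2 / 4"
  have "\<delta> > 0" using disc by (simp add: \<delta>_def)
  have "q > 0" using disc by (smt (verit) zero_le_power2)
  define \<rho> where "\<rho> = q / \<beta>\<^sup>2"
  have \<rho>: "0 < \<rho>" "\<rho> < 1" using \<open>q > 0\<close> q_less \<open>0 < \<beta>\<close> by (simp_all add: \<rho>_def)
  have bound: "(e k / \<beta> ^ k)\<^sup>2 \<le> N 0 / \<delta> * \<rho> ^ k" for k
  proof -
    have "N k = (e (k + 1) - p * e k / 2)\<^sup>2 + \<delta> * (e k)\<^sup>2"
      by (simp add: N_def \<delta>_def algebra_simps power2_eq_square)
    then have "\<delta> * (e k)\<^sup>2 \<le> N 0 * q ^ k" using N[of k] by (metis le_add_same_cancel2 zero_le_power2)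
    then have "(e k)\<^sup>2 \<le> N 0 / \<delta> * q ^ k" using \<open>\<delta> > 0\<close> by (simp add: field_simps)
    then have "(e k)\<^sup>2 / (\<beta>\<^sup>2) ^ k \<le> N 0 / \<delta> * q ^ k / (\<beta>\<^sup>2) ^ k"
      using \<open>0 < \<beta>\<close> by (intro divide_right_mono) auto
    then show ?thesis by (simp add: \<rho>_def power_divide power_mult_distrib flip: power_mult)
      (simp add: mult.commute power_mult)
  qed
  have majorant: "(\<lambda>k. N 0 / \<delta> * \<rho> ^ k) \<longlonglongrightarrow> 0"
    using \<rho> by (intro tendsto_mult_right_zero LIMSEQ_power_zero) auto
  have "(\<lambda>k. (e k / \<beta> ^ k)\<^sup>2) \<longlonglongrightarrow> 0"
  proof (rule tendsto_sandwich[of "\<lambda>_. 0" _ sequentially "\<lambda>k. N 0 / \<delta> * \<rho> ^ k"])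
    show "\<forall>\<^sub>F k in sequentially. 0 \<le> (e k / \<beta> ^ k)\<^sup>2" by simp
    show "\<forall>\<^sub>F k in sequentially. (e k / \<beta> ^ k)\<^sup>2 \<le> N 0 / \<delta> * \<rho> ^ k"
      by (intro always_eventually allI bound)
  qed (use majorant in auto)
  then have "(\<lambda>k. sqrt ((e k / \<beta> ^ k)\<^sup>2)) \<longlonglongrightarrow> sqrt 0" by (rule tendsto_real_sqrt)
  then show ?thesis by (simp only: real_sqrt_abs real_sqrt_zero tendsto_rabs_zero_iff)
qed

lemma cubic_root_bounds:
  fixes \<alpha> :: real
  assumes "\<alpha> ^ 3 - 5 * \<alpha> ^ 2 + 7 * \<alpha> - 4 = 0"
  shows "3.2 < \<alpha>" "\<alpha> < 3.21"
proof -
  have e: "(\<alpha> - 1)\<^sup>2 * (\<alpha> - 3) = 1"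
    using assms by (simp add: power2_eq_square power3_eq_cube algebra_simps)
  then have "\<alpha> > 3" by (smt (verit) mult_nonneg_nonpos zero_le_power2)
  show "3.2 < \<alpha>"
  proof (rule ccontr)
    assume "\<not> 3.2 < \<alpha>"
    then have "(\<alpha> - 1)\<^sup>2 * (\<alpha> - 3) \<le> 2.2\<^sup>2 * 0.2"
      using \<open>\<alpha> > 3\<close> by (intro mult_mono power_mono) auto
    then show False using e by (simp add: power2_eq_square)
  qed
  show "\<alpha> < 3.21"
  proof (rule ccontr)
    assume "\<not> \<alpha> < 3.21"
    then have "2.21\<^sup>2 * 0.21 \<le> (\<alpha> - 1)\<^sup>2 * (\<alpha> - 3)"
      by (intro mult_mono power_mono) auto
    then show False using e by (simp add: power2_eq_square)
  qed
qed

text \<open>With p = 5 - \<alpha> and q = \<alpha> ^ 2 - 5 \<alpha> + 7 the characteristic polynomial factors as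
  (x - \<alpha>) (x ^ 2 - p x + q); applying the quadratic factor to a leaves the \<alpha>-component alone.\<close>

lemma cubic_recurrence_dominant_component:
  fixes \<alpha> :: real and a :: "nat \<Rightarrow> real"
  assumes root: "\<alpha> ^ 3 - 5 * \<alpha> ^ 2 + 7 * \<alpha> - 4 = 0"
    and rec: "\<And>k. k \<ge> 2 \<Longrightarrow> a (k + 3) = 5 * a (k + 2) - 7 * a (k + 1) + 4 * a k"
    and init: "a 2 = 2" "a 3 = 6" "a 4 = 19"
  shows "a (k + 4) - (5 - \<alpha>) * a (k + 3) + (\<alpha>\<^sup>2 - 5 * \<alpha> + 7) * a (k + 2)
    = (2 * \<alpha>\<^sup>2 - 4 * \<alpha> + 3) * \<alpha> ^ k"
proof -
  define p where "p = 5 - \<alpha>"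
  define q where "q = \<alpha>\<^sup>2 - 5 * \<alpha> + 7"
  define L where "L k = a (k + 4) - p * a (k + 3) + q * a (k + 2)" for k
  have L_Suc: "L (Suc k) = \<alpha> * L k" for k
  proof -
    have eqs: "k + 2 + 3 = k + 5" "k + 2 + 2 = k + 4" "k + 2 + 1 = k + 3" by simp_all
    have r: "a (k + 5) = 5 * a (k + 4) - 7 * a (k + 3) + 4 * a (k + 2)"
      using rec[of "k + 2"] unfolding eqs by simp
    have "L (Suc k) = a (k + 5) - p * a (k + 4) + q * a (k + 3)"
      by (simp add: L_def numeral_eq_Suc)
    also have "\<dots> = (5 - p) * a (k + 4) + (q - 7) * a (k + 3) + 4 * a (k + 2)"
      unfolding r by (simp add: algebra_simps)
    also have "\<dots> = \<alpha> * a (k + 4) - \<alpha> * p * a (k + 3) + \<alpha> * q * a (k + 2)"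
    proof -
      have "5 - p = \<alpha>" "q - 7 = - (\<alpha> * p)" "\<alpha> * q = 4"
        using root by (simp_all add: p_def q_def algebra_simps power2_eq_square power3_eq_cube)
      then show ?thesis by (simp only:) (simp add: algebra_simps)
    qed
    also have "\<dots> = \<alpha> * L k" by (simp add: L_def algebra_simps)
    finally show ?thesis .
  qed
  have "L 0 = a 4 - p * a 3 + q * a 2" by (simp add: L_def numeral_2_eq_2)
  also have "\<dots> = 2 * \<alpha>\<^sup>2 - 4 * \<alpha> + 3"
    unfolding init p_def q_def by (simp add: algebra_simps power2_eq_square)
  finally have "L k = (2 * \<alpha>\<^sup>2 - 4 * \<alpha> + 3) * \<alpha> ^ k"
    by (induction k) (simp_all add: L_Suc)
  then show ?thesis by (simp add: L_def p_def q_def)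
qed

text \<open>The remaining characteristic roots have modulus sqrt q < \<alpha>.\<close>

lemma cubic_recurrence_asymptotics:
  fixes \<alpha> :: real and a :: "nat \<Rightarrow> real"
  assumes root: "\<alpha> ^ 3 - 5 * \<alpha> ^ 2 + 7 * \<alpha> - 4 = 0"
    and rec: "\<And>k. k \<ge> 2 \<Longrightarrow> a (k + 3) = 5 * a (k + 2) - 7 * a (k + 1) + 4 * a k"
    and init: "a 2 = 2" "a 3 = 6" "a 4 = 19"
  shows "(\<lambda>n. a n / \<alpha> ^ n) \<longlonglongrightarrow> (2 * \<alpha>\<^sup>2 - 4 * \<alpha> + 3) / (11 * \<alpha>\<^sup>2 - 23 * \<alpha> + 20)"
proof -
  have \<alpha>: "3.2 < \<alpha>" "\<alpha> < 3.21" using cubic_root_bounds[OF root] by auto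
  define p where "p = 5 - \<alpha>"
  define q where "q = \<alpha>\<^sup>2 - 5 * \<alpha> + 7"
  define c where "c = (2 * \<alpha>\<^sup>2 - 4 * \<alpha> + 3) / (11 * \<alpha>\<^sup>2 - 23 * \<alpha> + 20)"
  have denom: "11 * \<alpha>\<^sup>2 - 23 * \<alpha> + 20 = \<alpha>\<^sup>2 * (\<alpha>\<^sup>2 - p * \<alpha> + q)"
    using root by (simp add: p_def q_def power2_eq_square power3_eq_cube algebra_simps) algebra
  have "\<alpha> * (11 * \<alpha> - 23) > 0" using \<alpha> by (intro mult_pos_pos) auto
  then have "11 * \<alpha>\<^sup>2 - 23 * \<alpha> + 20 > 0" by (simp add: power2_eq_square algebra_simps)
  define e where "e k = a (k + 2) - c * \<alpha> ^ (k + 2)" for k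
  have "e (k + 2) = p * e (k + 1) - q * e k" for k
  proof -
    have "e (k + 2) - p * e (k + 1) + q * e k
        = (a (k + 4) - p * a (k + 3) + q * a (k + 2)) - c * \<alpha> ^ k * (\<alpha>\<^sup>2 * (\<alpha>\<^sup>2 - p * \<alpha> + q))"
      by (simp add: e_def algebra_simps power_add power2_eq_square numeral_eq_Suc)
    also have "\<dots> = (2 * \<alpha>\<^sup>2 - 4 * \<alpha> + 3) * \<alpha> ^ k - c * \<alpha> ^ k * (11 * \<alpha>\<^sup>2 - 23 * \<alpha> + 20)"
      using cubic_recurrence_dominant_component[OF root rec init, of k] by (simp add: denom p_def q_def)
    also have "\<dots> = 0"
      using \<open>11 * \<alpha>\<^sup>2 - 23 * \<alpha> + 20 > 0\<close> by (simp add: c_def)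
    finally show ?thesis by simp
  qed
  moreover have "p\<^sup>2 < 4 * q"
  proof -
    have "4 * q - p\<^sup>2 = (3 * \<alpha> - 1) * (\<alpha> - 3)"
      by (simp add: p_def q_def algebra_simps power2_eq_square)
    moreover have "(3 * \<alpha> - 1) * (\<alpha> - 3) > 0" using \<alpha> by (intro mult_pos_pos) auto
    ultimately show ?thesis by simp
  qed
  moreover have "q < \<alpha>\<^sup>2"
  proof -
    have "\<alpha> * q < \<alpha> * \<alpha>\<^sup>2"
      using root \<alpha> power_strict_mono[of 2 \<alpha> 3]
      by (simp add: q_def power2_eq_square power3_eq_cube algebra_simps)
    then show ?thesis using \<alpha> by simp
  qed
  ultimately have "(\<lambda>k. e k / \<alpha> ^ k) \<longlonglongrightarrow> 0"
    using \<alpha> by (intro second_order_recurrence_decay) auto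
  then have "(\<lambda>k. c + e k / \<alpha> ^ k / \<alpha>\<^sup>2) \<longlonglongrightarrow> c + 0 / \<alpha>\<^sup>2"
    using \<alpha> by (intro tendsto_intros) auto
  moreover have "c + e k / \<alpha> ^ k / \<alpha>\<^sup>2 = a (k + 2) / \<alpha> ^ (k + 2)" for k
    using \<alpha> by (simp add: e_def field_simps power_add power2_eq_square)
  ultimately have "(\<lambda>k. a (k + 2) / \<alpha> ^ (k + 2)) \<longlonglongrightarrow> c" by simp
  then show ?thesis unfolding c_def by (rule LIMSEQ_offset)
qed

lemma cubic_root_constant_bounds:
  fixes \<alpha> :: real
  assumes "3.2 < \<alpha>" "\<alpha> < 3.21"
  defines "c \<equiv> (2 * \<alpha>\<^sup>2 - 4 * \<alpha> + 3) / (11 * \<alpha>\<^sup>2 - 23 * \<alpha> + 20)"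
  shows "c > 0" "\<bar>c - 0.1809\<bar> < 0.0001"
proof -
  have "\<alpha> * (11 * \<alpha> - 23) > 0" "\<alpha> * (2 * \<alpha> - 4) > 0" using assms by (intro mult_pos_pos, auto)+
  then have den: "11 * \<alpha>\<^sup>2 - 23 * \<alpha> + 20 > 0" and "2 * \<alpha>\<^sup>2 - 4 * \<alpha> + 3 > 0"
    by (simp_all add: power2_eq_square algebra_simps)
  then show "c > 0" unfolding c_def using den by simp
  have "\<alpha>\<^sup>2 > 10.24" "\<alpha>\<^sup>2 < 10.3041"
    using power_strict_mono[of "3.2" \<alpha> 2] power_strict_mono[of \<alpha> "3.21" 2] assms
    by (simp_all add: power2_eq_square)
  then have "0.1808 * (11 * \<alpha>\<^sup>2 - 23 * \<alpha> + 20) < 2 * \<alpha>\<^sup>2 - 4 * \<alpha> + 3"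
      "2 * \<alpha>\<^sup>2 - 4 * \<alpha> + 3 < 0.1810 * (11 * \<alpha>\<^sup>2 - 23 * \<alpha> + 20)"
    using assms by simp_all
  then have "0.1808 < c" "c < 0.1810"
    unfolding c_def using den by (simp_all add: pos_less_divide_eq pos_divide_less_eq)
  then show "\<bar>c - 0.1809\<bar> < 0.0001" unfolding abs_less_iff by linarith
qed

lemma top_recursion_narrow_configs: "top_recursion (\<lambda>n m. card (narrow_configs_top n m))"
  by unfold_locales (simp_all add: narrow_configs_top_self card_narrow_configs_top)

lemma a_seq_eq_row_sum:
  "n \<ge> 1 \<Longrightarrow> int (a_seq n) = row_sum (\<lambda>n m. card (narrow_configs_top n m)) n"
  by (simp add: a_seq_eq_card_narrow_configs card_narrow_configs row_sum_def)

theorem corollary4p4: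
  fixes \<alpha> :: real
  assumes "\<alpha> ^ 3 - 5 * \<alpha> ^ 2 + 7 * \<alpha> - 4 = 0"
  shows "\<exists>c::real. c > 0 \<and> \<bar>c - 0.1809\<bar> < 0.0001 \<and>
           (\<lambda>n. real (a_seq n) / \<alpha> ^ n) \<longlonglongrightarrow> c"
proof -
  define g where "g n m = card (narrow_configs_top n m)" for n m
  define c where "c = (2 * \<alpha>\<^sup>2 - 4 * \<alpha> + 3) / (11 * \<alpha>\<^sup>2 - 23 * \<alpha> + 20)"
  interpret top_recursion g unfolding g_def by (rule top_recursion_narrow_configs)
  have "(\<lambda>n. of_int (row_sum g n) / \<alpha> ^ n) \<longlonglongrightarrow> c"
    unfolding c_def using row_sum_recurrence row_sum_initial
    by (intro cubic_recurrence_asymptotics[OF assms]) (simp_all flip: of_int_mult of_int_diff of_int_add)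
  moreover have "\<forall>\<^sub>F n in sequentially. of_int (row_sum g n) / \<alpha> ^ n = real (a_seq n) / \<alpha> ^ n"
    using eventually_ge_at_top[of 1]
    by eventually_elim (simp add: a_seq_eq_row_sum[symmetric] g_def[abs_def])
  ultimately have "(\<lambda>n. real (a_seq n) / \<alpha> ^ n) \<longlonglongrightarrow> c"
    by (rule Lim_transform_eventually)
  moreover have "c > 0" "\<bar>c - 0.1809\<bar> < 0.0001"
    unfolding c_def using cubic_root_constant_bounds cubic_root_bounds[OF assms] by auto
  ultimately show ?thesis by blast
qed

end
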